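(* Let $\mathfrak g$ be a finite-dimensional complex simple Lie algebra with dual Coxeter number $h^\vee$ and invariant form $\langle\cdot,\cdot\rangle$ normalized so that the Killing form equals $2h^\vee\langle\cdot,\cdot\rangle$; let $\{v^{(i)}\},\{w^{(i)}\}$ be dual bases of $\mathfrak g$ with respect to $\langle\cdot,\cdot\rangle$. Let $x\in\mathfrak g$ be nilpotent and $\kappa\ne -h^\vee$. Consider the Lie algebra with generators $a_m$ ($a\in\mathfrak g$ linear, $m\in\mathbb Z$) and relations $[a_m,b_n]=[a,b]_{m+n}+\delta_{m,-n}\kappa\langle [x,a]+ma,b\rangle$, and a module $M$ over it on which for every $v\in M$ and $a\in\mathfrak g$ we have $a_mv=0$ for $m\gg0$. Define on $M$ $$L_n=\frac{1}{2(\kappa+h^\vee)}\Big(\sum_i\sum_{m\in\mathbb Z}:v^{(i)}_m w^{(i)}_{n-m}:\;-\;\sum_i\big[[x,v^{(i)}],w^{(i)}\big]_n\Big),$$ where $:a_mb_k:=a_mb_k$ if $m<0$ and $:a_mb_k:=b_ka_m$ if $m\ge0$. Then for all $a\in\mathfrak g$ and $n\in\mathbb Z$, $$[L_{-1},a_n]=-n\,a_{n-1}-([x,a])_{n-1}.$$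
   Context: This is the twisted Sugawara operator for the $g$-twisted mode algebra of the affine vertex algebra at level $\kappa$ with $g=e^{-2\pi i x}$ (the case of trivial semisimple part $s=0$). *)

theory Defs
  imports Complex_Main "HOL-Library.Groups_Big_Fun"
begin

text \<open>Complex vector spaces are given by a scalar multiplication
  sG :: complex \<Rightarrow> 'g \<Rightarrow> 'g satisfying the library locale vector_space.\<close>

definition bilinear_form :: "(complex \<Rightarrow> 'g::ab_group_add \<Rightarrow> 'g) \<Rightarrow> ('g \<Rightarrow> 'g \<Rightarrow> complex) \<Rightarrow> bool" where
  "bilinear_form sG B \<longleftrightarrow>
     (\<forall>a. Vector_Spaces.linear sG (*) (\<lambda>b. B a b)) \<and> (\<forall>b. Vector_Spaces.linear sG (*) (\<lambda>a. B a b))"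

definition lie_algebra :: "(complex \<Rightarrow> 'g::ab_group_add \<Rightarrow> 'g) \<Rightarrow> ('g \<Rightarrow> 'g \<Rightarrow> 'g) \<Rightarrow> bool" where
  "lie_algebra sG br \<longleftrightarrow> vector_space sG \<and>
     (\<forall>a. Vector_Spaces.linear sG sG (br a)) \<and> (\<forall>b. Vector_Spaces.linear sG sG (\<lambda>a. br a b)) \<and>
     (\<forall>a. br a a = 0) \<and>
     (\<forall>a b c. br a (br b c) + br b (br c a) + br c (br a b) = 0)"

definition lie_ideal :: "(complex \<Rightarrow> 'g::ab_group_add \<Rightarrow> 'g) \<Rightarrow> ('g \<Rightarrow> 'g \<Rightarrow> 'g) \<Rightarrow> 'g set \<Rightarrow> bool" where
  "lie_ideal sG br I \<longleftrightarrow> module.subspace sG I \<and> (\<forall>a u. u \<in> I \<longrightarrow> br a u \<in> I)"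

definition finite_dim_space :: "(complex \<Rightarrow> 'g::ab_group_add \<Rightarrow> 'g) \<Rightarrow> bool" where
  "finite_dim_space sG \<longleftrightarrow> (\<exists>Bs. finite Bs \<and> module.independent sG Bs \<and> module.span sG Bs = UNIV)"

definition simple_lie_algebra :: "(complex \<Rightarrow> 'g::ab_group_add \<Rightarrow> 'g) \<Rightarrow> ('g \<Rightarrow> 'g \<Rightarrow> 'g) \<Rightarrow> bool" where
  "simple_lie_algebra sG br \<longleftrightarrow> lie_algebra sG br \<and> finite_dim_space sG \<and>
     (\<exists>a b. br a b \<noteq> 0) \<and> (\<forall>I. lie_ideal sG br I \<longrightarrow> I = {0} \<or> I = UNIV)"

definition lin_trace :: "(complex \<Rightarrow> 'g::ab_group_add \<Rightarrow> 'g) \<Rightarrow> ('g \<Rightarrow> 'g) \<Rightarrow> complex" where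
  "lin_trace sG T =
     (let Bs = (SOME Bs. finite Bs \<and> module.independent sG Bs \<and> module.span sG Bs = UNIV)
      in \<Sum>b\<in>Bs. module.representation sG Bs (T b) b)"

definition killing_form :: "(complex \<Rightarrow> 'g::ab_group_add \<Rightarrow> 'g) \<Rightarrow> ('g \<Rightarrow> 'g \<Rightarrow> 'g) \<Rightarrow> 'g \<Rightarrow> 'g \<Rightarrow> complex" where
  "killing_form sG br a b = lin_trace sG (\<lambda>u. br a (br b u))"

definition invariant_form :: "(complex \<Rightarrow> 'g::ab_group_add \<Rightarrow> 'g) \<Rightarrow> ('g \<Rightarrow> 'g \<Rightarrow> 'g) \<Rightarrow> ('g \<Rightarrow> 'g \<Rightarrow> complex) \<Rightarrow> bool" where
  "invariant_form sG br B \<longleftrightarrow> bilinear_form sG B \<and> (\<forall>a b. B a b = B b a) \<and>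
     (\<forall>a b c. B (br a b) c = B a (br b c)) \<and> (\<forall>a. (\<forall>b. B a b = 0) \<longrightarrow> a = 0)"

definition dual_bases :: "(complex \<Rightarrow> 'g::ab_group_add \<Rightarrow> 'g) \<Rightarrow> ('g \<Rightarrow> 'g \<Rightarrow> complex) \<Rightarrow> nat \<Rightarrow> (nat \<Rightarrow> 'g) \<Rightarrow> (nat \<Rightarrow> 'g) \<Rightarrow> bool" where
  "dual_bases sG B d v w \<longleftrightarrow>
     inj_on v {..<d} \<and> module.independent sG (v ` {..<d}) \<and> module.span sG (v ` {..<d}) = UNIV \<and>
     inj_on w {..<d} \<and> module.independent sG (w ` {..<d}) \<and> module.span sG (w ` {..<d}) = UNIV \<and>
     (\<forall>i<d. \<forall>j<d. B (v i) (w j) = (if i = j then 1 else 0))"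

definition ad_nilpotent :: "('g::zero \<Rightarrow> 'g \<Rightarrow> 'g) \<Rightarrow> 'g \<Rightarrow> bool" where
  "ad_nilpotent br x \<longleftrightarrow> (\<exists>k. \<forall>u. (br x ^^ k) u = 0)"

text \<open>A module over the g-twisted mode algebra: rho a m u is a_m acting on u,
  with [a_m,b_n] = [a,b]_{m+n} + delta_{m,-n} kappa <[x,a]+ma,b>,
  and a_m u = 0 for m large.\<close>
definition twisted_mode_module ::
  "(complex \<Rightarrow> 'g::ab_group_add \<Rightarrow> 'g) \<Rightarrow> ('g \<Rightarrow> 'g \<Rightarrow> 'g) \<Rightarrow> ('g \<Rightarrow> 'g \<Rightarrow> complex) \<Rightarrow> 'g \<Rightarrow> complex
   \<Rightarrow> (complex \<Rightarrow> 'm::ab_group_add \<Rightarrow> 'm) \<Rightarrow> ('g \<Rightarrow> int \<Rightarrow> 'm \<Rightarrow> 'm) \<Rightarrow> bool" where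
  "twisted_mode_module sG br B x \<kappa> sM \<rho> \<longleftrightarrow>
     vector_space sM \<and>
     (\<forall>a m. Vector_Spaces.linear sM sM (\<rho> a m)) \<and>
     (\<forall>m u. Vector_Spaces.linear sG sM (\<lambda>a. \<rho> a m u)) \<and>
     (\<forall>a b m n u. \<rho> a m (\<rho> b n u) - \<rho> b n (\<rho> a m u) =
        \<rho> (br a b) (m + n) u +
        sM (if m = - n then \<kappa> * B (br x a + sG (of_int m) a) b else 0) u) \<and>
     (\<forall>a u. \<exists>N. \<forall>m\<ge>N. \<rho> a m u = 0)"

definition nord :: "('g \<Rightarrow> int \<Rightarrow> 'm \<Rightarrow> 'm) \<Rightarrow> 'g \<Rightarrow> int \<Rightarrow> 'g \<Rightarrow> int \<Rightarrow> 'm \<Rightarrow> 'm" where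
  "nord \<rho> a m b k u = (if m < 0 then \<rho> a m (\<rho> b k u) else \<rho> b k (\<rho> a m u))"

text \<open>The twisted Sugawara operator L_n; the sum over m in Z is the finitely supported
  sum Sum_any (only finitely many terms are nonzero on a given vector).\<close>
definition sugawara ::
  "('g::ab_group_add \<Rightarrow> 'g \<Rightarrow> 'g) \<Rightarrow> 'g \<Rightarrow> complex \<Rightarrow> complex
   \<Rightarrow> (complex \<Rightarrow> 'm::ab_group_add \<Rightarrow> 'm) \<Rightarrow> ('g \<Rightarrow> int \<Rightarrow> 'm \<Rightarrow> 'm)
   \<Rightarrow> nat \<Rightarrow> (nat \<Rightarrow> 'g) \<Rightarrow> (nat \<Rightarrow> 'g) \<Rightarrow> int \<Rightarrow> 'm \<Rightarrow> 'm" where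
  "sugawara br x hv \<kappa> sM \<rho> d v w n u =
     sM (1 / (2 * (\<kappa> + hv)))
       ((\<Sum>i<d. Sum_any (\<lambda>m. nord \<rho> (v i) m (w i) (n - m) u))
        - (\<Sum>i<d. \<rho> (br (br x (v i)) (w i)) n u))"

end

theory Submission
  imports Defs
begin

text \<open>Write L_{-1} = (S - Y) / (2(\<kappa> + hv)) with S = \<Sum>_i \<Sum>_m :v_m w_{-1-m}: over the dual bases
  and Y = \<Sum>_i [[x,v],w]_{-1}. Commuting a_n through a normally ordered product leaves the
  normally ordered sums of :v_m [w,a]_k: and :[v,a]_m w_k:, which cancel after summing over the
  dual bases, by invariance of the form. The second one only arises after restoring normal order;
  this costs n \<Sum>_i [[v,a],w]_{n-1} = -2 hv n a_{n-1} (the Casimir acts by 2 hv because of the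
  Killing normalisation) plus, for n = 1, a central term. The remaining central terms of the
  twisted bracket expand in the dual basis to -2\<kappa>(n a_{n-1} + [x,a]_{n-1}). Finally
  Y = 2 hv x_{-1}, whose commutator with a_n is 2 hv [x,a]_{n-1} plus the same central term, which
  therefore cancels and leaves 2(\<kappa> + hv)(-n a_{n-1} - [x,a]_{n-1}).\<close>

section \<open>Finitely supported sums\<close>

lemma finite_support_add:
  fixes f g :: "'a \<Rightarrow> 'b::monoid_add"
  assumes "finite {m. f m \<noteq> 0}" and "finite {m. g m \<noteq> 0}"
  shows "finite {m. f m + g m \<noteq> 0}"
  by (rule finite_subset[of _ "{m. f m \<noteq> 0} \<union> {m. g m \<noteq> 0}"]) (use assms in auto)

lemma Sum_any_diff:
  fixes f g :: "'a \<Rightarrow> 'b::ab_group_add"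
  assumes "finite {m. f m \<noteq> 0}" and "finite {m. g m \<noteq> 0}"
  shows "Sum_any (\<lambda>m. f m - g m) = Sum_any f - Sum_any g"
  using Sum_any.distrib[of f "\<lambda>m. - g m"] assms by (simp add: Sum_any.expand_set sum_negf)

lemma Sum_any_additive:
  assumes "finite {m. f m \<noteq> 0}" and "additive L"
  shows "L (Sum_any f) = Sum_any (\<lambda>m. L (f m))"
proof -
  interpret additive L by fact
  have "Sum_any f = sum f {m. f m \<noteq> 0}" by (simp add: Sum_any.expand_set)
  moreover have "Sum_any (\<lambda>m. L (f m)) = sum (\<lambda>m. L (f m)) {m. f m \<noteq> 0}"
    using assms(1) by (rule Sum_any.expand_superset) (auto simp: zero)
  ultimately show ?thesis by (simp add: sum)
qed

lemma Sum_any_sum: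
  assumes "finite I" and "\<And>i. i \<in> I \<Longrightarrow> finite {m. f i m \<noteq> 0}"
  shows "Sum_any (\<lambda>m. \<Sum>i\<in>I. f i m) = (\<Sum>i\<in>I. Sum_any (f i) :: 'a::comm_monoid_add)"
  using assms
proof (induction I rule: finite_induct)
  case (insert i I)
  have "finite {m. (\<Sum>i\<in>I. f i m) \<noteq> 0}"
    by (rule finite_subset[of _ "\<Union>i\<in>I. {m. f i m \<noteq> 0}"])
       (use insert in \<open>auto elim: sum.not_neutral_contains_not_neutral\<close>)
  with insert show ?case by (simp add: Sum_any.distrib)
qed simp

lemma Sum_any_shift: "Sum_any (\<lambda>m. f (m + n)) = Sum_any (f :: int \<Rightarrow> 'a::comm_monoid_add)"
  by (rule Sum_any.reindex_cong[symmetric, of "\<lambda>m. m + n"])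
     (auto simp: bij_def inj_def image_iff o_def intro!: exI[of _ "_ - n"])

lemma Sum_any_signed_count:
  assumes "vector_space s"
  shows "Sum_any (\<lambda>k::int. if 0 \<le> k \<and> k < n then z else if n \<le> k \<and> k < 0 then - z else 0)
    = s (of_int n) z"
proof -
  interpret vector_space s by fact
  show ?thesis
  proof (cases "0 \<le> n")
    case True
    then have "Sum_any (\<lambda>k. if 0 \<le> k \<and> k < n then z else if n \<le> k \<and> k < 0 then - z else 0)
        = Sum_any (\<lambda>k. if k \<in> {0..<n} then z else 0)"
      by (intro Sum_any.cong) auto
    also have "\<dots> = sum (\<lambda>k. z) {0..<n}"
      by (simp add: Sum_any.conditionalize)
    also have "\<dots> = s (of_int n) z"
      using True by (simp add: sum_constant_scale)
    finally show ?thesis .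
  next
    case False
    then have "Sum_any (\<lambda>k. if 0 \<le> k \<and> k < n then z else if n \<le> k \<and> k < 0 then - z else 0)
        = Sum_any (\<lambda>k. if k \<in> {n..<0} then - z else 0)"
      by (intro Sum_any.cong) auto
    also have "\<dots> = sum (\<lambda>k. - z) {n..<0}"
      by (simp add: Sum_any.conditionalize)
    also have "\<dots> = s (of_int n) z"
      using False by (simp add: sum_constant_scale)
    finally show ?thesis .
  qed
qed

section \<open>Dual bases of an invariant form\<close>

locale lie_algebra_dual_bases =
  fixes sG :: "complex \<Rightarrow> 'g::ab_group_add \<Rightarrow> 'g"
    and br :: "'g \<Rightarrow> 'g \<Rightarrow> 'g"
    and B :: "'g \<Rightarrow> 'g \<Rightarrow> complex"
    and d :: nat and v w :: "nat \<Rightarrow> 'g"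
  assumes lie: "lie_algebra sG br"
    and form: "invariant_form sG br B"
    and bases: "dual_bases sG B d v w"
begin

sublocale G: vector_space sG
  using lie by (simp add: lie_algebra_def)

lemma bracket_linear: "Vector_Spaces.linear sG sG (br a)" "Vector_Spaces.linear sG sG (\<lambda>a. br a b)"
  using lie by (simp_all add: lie_algebra_def)

lemma form_linear: "Vector_Spaces.linear sG (*) (B a)" "Vector_Spaces.linear sG (*) (\<lambda>a. B a b)"
  using form by (simp_all add: invariant_form_def bilinear_form_def)

lemmas bracket_hom = bracket_linear[THEN module_hom_iff_linear[THEN iffD2]]
lemmas form_hom = form_linear[THEN module_hom_iff_linear[THEN iffD2]]

lemmas bracket_distrib =
  bracket_hom[THEN module_hom.add] bracket_hom[THEN module_hom.scale] bracket_hom[THEN module_hom.sum]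
  bracket_hom[THEN module_hom.neg] bracket_hom[THEN module_hom.diff] bracket_hom[THEN module_hom.zero]

lemmas form_distrib =
  form_hom[THEN module_hom.add] form_hom[THEN module_hom.scale] form_hom[THEN module_hom.sum]
  form_hom[THEN module_hom.neg] form_hom[THEN module_hom.diff] form_hom[THEN module_hom.zero]

lemma bracket_self: "br a a = 0"
  using lie by (simp add: lie_algebra_def)

lemma bracket_antisym: "br b a = - br a b"
proof -
  have "br (a + b) (a + b) = (br a a + br b a) + (br a b + br b b)"
    by (simp only: bracket_distrib)
  then show ?thesis by (simp add: bracket_self add_eq_0_iff add.commute)
qed

lemma form_sym: "B a b = B b a"
  and form_invariant: "B (br a b) c = B a (br b c)"
  and form_nondegenerate: "(\<And>b. B a b = 0) \<Longrightarrow> a = 0"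
  using form by (auto simp: invariant_form_def)

lemma dual_bases_spanning: "G.span (v ` {..<d}) = UNIV" "G.span (w ` {..<d}) = UNIV"
  and dual_bases_pairing: "i < d \<Longrightarrow> j < d \<Longrightarrow> B (v i) (w j) = (if i = j then 1 else 0)"
  using bases by (simp_all add: dual_bases_def)

lemma dual_bases_swap: "dual_bases sG B d w v"
  using bases by (auto simp: dual_bases_def form_sym[of "w _"])

lemma dual_basis_expansion: "y = (\<Sum>i<d. sG (B y (w i)) (v i))"
proof -
  define z where "z = y - (\<Sum>i<d. sG (B y (w i)) (v i))"
  have "B z (w j) = 0" if "j < d" for j
    using that by (simp add: z_def form_distrib dual_bases_pairing if_distrib cong: if_cong)
  then have "B z b = 0" for b
    using module_hom.eq_0_on_span[OF form_hom(1), of "w ` {..<d}" z b]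
    by (auto simp: dual_bases_spanning)
  then have "z = 0" by (rule form_nondegenerate)
  then show ?thesis by (simp add: z_def)
qed

lemma dual_basis_expansion': "y = (\<Sum>i<d. sG (B y (v i)) (w i))"
proof -
  interpret swapped: lie_algebra_dual_bases sG br B d w v
    using lie form dual_bases_swap by unfold_locales
  show ?thesis by (rule swapped.dual_basis_expansion)
qed

lemma linear_dual_basis_expansion:
  assumes "Vector_Spaces.linear sG s f"
  shows "f y = (\<Sum>i<d. s (B y (w i)) (f (v i)))"
    and "f y = (\<Sum>i<d. s (B y (v i)) (f (w i)))"
proof -
  interpret f: Vector_Spaces.linear sG s f by fact
  show "f y = (\<Sum>i<d. s (B y (w i)) (f (v i)))"
    using arg_cong[OF dual_basis_expansion[of y], of f] by (simp add: f.sum f.scale)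
  show "f y = (\<Sum>i<d. s (B y (v i)) (f (w i)))"
    using arg_cong[OF dual_basis_expansion'[of y], of f] by (simp add: f.sum f.scale)
qed

lemma form_cancel:
  assumes "\<And>c. B c y = B c z"
  shows "y = z"
proof -
  have "B (y - z) c = 0" for c
    using assms[of c] by (simp add: form_sym[of _ c] form_distrib)
  then show ?thesis using form_nondegenerate[of "y - z"] by simp
qed

lemma lin_trace_dual_bases:
  assumes "Vector_Spaces.linear sG sG T"
  shows "lin_trace sG T = (\<Sum>i<d. B (T (v i)) (w i))"
proof -
  interpret T: Vector_Spaces.linear sG sG T by fact
  define Bs where "Bs = (SOME Bs. finite Bs \<and> G.independent Bs \<and> G.span Bs = UNIV)"
  have "finite (v ` {..<d}) \<and> G.independent (v ` {..<d}) \<and> G.span (v ` {..<d}) = UNIV"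
    using bases by (simp add: dual_bases_def)
  then have "finite Bs \<and> G.independent Bs \<and> G.span Bs = UNIV"
    unfolding Bs_def by (rule someI)
  then have fin: "finite Bs" and indep: "G.independent Bs" and span: "G.span Bs = UNIV"
    by auto
  have "lin_trace sG T = (\<Sum>b\<in>Bs. G.representation Bs (T b) b)"
    by (simp add: lin_trace_def Bs_def Let_def)
  also have "\<dots> = (\<Sum>b\<in>Bs. \<Sum>i<d. B b (w i) * G.representation Bs (T (v i)) b)"
    by (subst linear_dual_basis_expansion(1)[OF assms])
       (simp add: G.representation_sum[OF indep] G.representation_scale[OF indep] span)
  also have "\<dots> = (\<Sum>i<d. B (\<Sum>b\<in>Bs. sG (G.representation Bs (T (v i)) b) b) (w i))"
    by (subst sum.swap) (simp add: form_distrib mult.commute)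
  also have "\<dots> = (\<Sum>i<d. B (T (v i)) (w i))"
    by (simp add: G.sum_representation_eq[OF indep _ fin] span)
  finally show ?thesis .
qed

lemma bilinear_dual_bases_invariance:
  assumes "\<And>q. Vector_Spaces.linear sG s (\<lambda>p. f p q)" and "\<And>p. Vector_Spaces.linear sG s (f p)"
  shows "(\<Sum>i<d. f (v i) (br (w i) a)) + (\<Sum>i<d. f (br (v i) a) (w i)) = 0"
proof -
  interpret s: vector_space s
    using assms(2) by (rule Vector_Spaces.linear.axioms(2))
  have coeff: "B (br (w j) a) (v i) = - B (br (v i) a) (w j)" for i j
  proof -
    have "B (br (w j) a) (v i) = B (w j) (- br (v i) a)"
      by (simp add: form_invariant bracket_antisym[of a])
    then show ?thesis by (simp add: form_distrib form_sym[of "w j"])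
  qed
  have "(\<Sum>i<d. f (br (v i) a) (w i)) = (\<Sum>i<d. \<Sum>j<d. s (B (br (v i) a) (w j)) (f (v j) (w i)))"
    by (subst linear_dual_basis_expansion(1)[OF assms(1)]) simp
  also have "\<dots> = (\<Sum>j<d. \<Sum>i<d. s (- B (br (w j) a) (v i)) (f (v j) (w i)))"
    by (subst sum.swap) (simp add: coeff)
  also have "\<dots> = - (\<Sum>j<d. f (v j) (br (w j) a))"
    using linear_dual_basis_expansion(2)[OF assms(2), symmetric]
    by (simp only: s.scale_minus_left sum_negf)
  finally show ?thesis by simp
qed

lemma form_twist: "B (br z q + sG c q) a = B (sG c a - br z a) q"
proof -
  have "B (br z q) a = - B (br z a) q"
    by (simp add: form_invariant bracket_antisym[of q] form_distrib form_sym[of z])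
  then show ?thesis by (simp add: form_distrib form_sym[of q a])
qed

lemma twisted_dual_basis_expansion:
  assumes "Vector_Spaces.linear sG s f"
  shows "(\<Sum>i<d. s (B (br z (w i) + sG c (w i)) a) (f (v i))) = f (sG c a - br z a)"
    and "(\<Sum>i<d. s (B (br z (v i) + sG c (v i)) a) (f (w i))) = f (sG c a - br z a)"
  by (simp_all add: form_twist linear_dual_basis_expansion[OF assms, symmetric])

end

locale killing_normalized_dual_bases = lie_algebra_dual_bases +
  fixes hv :: complex
  assumes killing: "\<And>a b. killing_form sG br a b = 2 * hv * B a b"
begin

lemma casimir_action: "(\<Sum>i<d. br (br b (v i)) (w i)) = sG (2 * hv) b"
proof (rule form_cancel)
  fix a
  have ad_ad: "Vector_Spaces.linear sG sG (\<lambda>u. br a (br b u))"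
    using Vector_Spaces.linear_compose[OF bracket_linear(1)[of b] bracket_linear(1)[of a]]
    by (simp add: o_def)
  have "B a (\<Sum>i<d. br (br b (v i)) (w i)) = (\<Sum>i<d. B (br a (br b (v i))) (w i))"
    by (simp add: form_distrib form_invariant)
  also have "\<dots> = killing_form sG br a b"
    unfolding killing_form_def by (rule lin_trace_dual_bases[OF ad_ad, symmetric])
  also have "\<dots> = B a (sG (2 * hv) b)"
    by (simp add: killing form_distrib)
  finally show "B a (\<Sum>i<d. br (br b (v i)) (w i)) = B a (sG (2 * hv) b)" .
qed

lemma casimir_action': "(\<Sum>i<d. br (br (v i) a) (w i)) = sG (- 2 * hv) a"
  using casimir_action[of a] by (simp add: bracket_antisym[of "v _" a] bracket_distrib sum_negf)

end

section \<open>Commutators in the twisted mode algebra\<close>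

text \<open>Commuting a_n past the first factor of :p_m q_k: produces [p,a]_{m+n}, still ordered by the
  sign of m, i.e. a product ordered with cutoff n. Normal ordering is cutoff 0.\<close>

definition cutoff_product :: "int \<Rightarrow> ('g \<Rightarrow> int \<Rightarrow> 'm \<Rightarrow> 'm) \<Rightarrow> 'g \<Rightarrow> int \<Rightarrow> 'g \<Rightarrow> int \<Rightarrow> 'm \<Rightarrow> 'm" where
  "cutoff_product t \<rho> a m b k u = (if m < t then \<rho> a m (\<rho> b k u) else \<rho> b k (\<rho> a m u))"

lemma nord_eq_cutoff_product: "nord \<rho> a m b k u = cutoff_product 0 \<rho> a m b k u"
  by (simp add: nord_def cutoff_product_def)

locale twisted_sugawara = killing_normalized_dual_bases sG br B d v w hv
  for sG :: "complex \<Rightarrow> 'g::ab_group_add \<Rightarrow> 'g" and br B d v w hv +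
  fixes x :: 'g and \<kappa> :: complex
    and sM :: "complex \<Rightarrow> 'm::ab_group_add \<Rightarrow> 'm"
    and \<rho> :: "'g \<Rightarrow> int \<Rightarrow> 'm \<Rightarrow> 'm"
  assumes module: "twisted_mode_module sG br B x \<kappa> sM \<rho>"
begin

sublocale M: vector_space sM
  using module by (simp add: twisted_mode_module_def)

lemma action_linear: "Vector_Spaces.linear sM sM (\<rho> a m)" "Vector_Spaces.linear sG sM (\<lambda>a. \<rho> a m u)"
  using module by (simp_all add: twisted_mode_module_def)

lemmas action_hom = action_linear[THEN module_hom_iff_linear[THEN iffD2]]

lemmas action_distrib =
  action_hom[THEN module_hom.add] action_hom[THEN module_hom.scale] action_hom[THEN module_hom.sum]
  action_hom[THEN module_hom.neg] action_hom[THEN module_hom.diff] action_hom[THEN module_hom.zero]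

lemma action_commutator:
  "\<rho> a m (\<rho> b k u) - \<rho> b k (\<rho> a m u) =
     \<rho> (br a b) (m + k) u + sM (if m = - k then \<kappa> * B (br x a + sG (of_int m) a) b else 0) u"
  using module by (simp add: twisted_mode_module_def)

lemma action_eventually_zero: "\<exists>N. \<forall>a m. N \<le> m \<longrightarrow> \<rho> a m u = 0"
proof -
  have "\<forall>i. \<exists>N. \<forall>m\<ge>N. \<rho> (v i) m u = 0"
    using module by (simp add: twisted_mode_module_def)
  then obtain N where N: "\<And>i m. N i \<le> m \<Longrightarrow> \<rho> (v i) m u = 0" by metis
  have "\<rho> a m u = 0" if "Max (N ` {..<d}) \<le> m" for a m
  proof (rule module_hom.eq_0_on_span[OF action_hom(2)])
    show "a \<in> G.span (v ` {..<d})" by (simp add: dual_bases_spanning)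
    show "\<rho> b m u = 0" if "b \<in> v ` {..<d}" for b
    proof -
      obtain i where "i < d" and "b = v i" using \<open>b \<in> v ` {..<d}\<close> by blast
      then have "N i \<le> Max (N ` {..<d})" by (intro Max_ge) auto
      then have "N i \<le> m" using \<open>Max (N ` {..<d}) \<le> m\<close> by simp
      then show ?thesis using N \<open>b = v i\<close> by simp
    qed
  qed
  then show ?thesis by blast
qed

lemma finite_support_cutoff_product:
  "finite {m. cutoff_product t \<rho> a (m + s) b (c - m) u \<noteq> 0}"
proof -
  obtain N where N: "\<And>p k. N \<le> k \<Longrightarrow> \<rho> p k u = 0"
    using action_eventually_zero by blast
  have "m \<in> {min (c - N) (t - s)..max (N - s) (t - s)}"
    if "cutoff_product t \<rho> a (m + s) b (c - m) u \<noteq> 0" for m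
  proof (cases "m + s < t")
    case True
    with that have "\<rho> b (c - m) u \<noteq> 0"
      by (auto simp: cutoff_product_def module_hom.zero[OF action_hom(1)])
    with N have "c - m < N" by (meson not_le)
    with True show ?thesis by simp
  next
    case False
    with that have "\<rho> a (m + s) u \<noteq> 0"
      by (auto simp: cutoff_product_def module_hom.zero[OF action_hom(1)])
    with N have "m + s < N" by (meson not_le)
    with False show ?thesis by simp
  qed
  then have "{m. cutoff_product t \<rho> a (m + s) b (c - m) u \<noteq> 0}
      \<subseteq> {min (c - N) (t - s)..max (N - s) (t - s)}"
    by blast
  then show ?thesis by (rule finite_subset) simp
qed

lemma finite_support_nord: "finite {m. nord \<rho> a m b (c - m) u \<noteq> 0}"
  using finite_support_cutoff_product[where t = 0 and s = 0] by (simp add: nord_eq_cutoff_product)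

lemma action_swap:
  "\<rho> a m (\<rho> b k u) = \<rho> b k (\<rho> a m u) + \<rho> (br a b) (m + k) u
     + sM (if m = - k then \<kappa> * B (br x a + sG (of_int m) a) b else 0) u"
  using action_commutator[of a m b k u] by (simp add: diff_eq_eq add.assoc)

lemma nord_commutator:
  "nord \<rho> p m q (-1 - m) (\<rho> a n u) - \<rho> a n (nord \<rho> p m q (-1 - m) u)
   = nord \<rho> p m (br q a) (n - 1 - m) u + cutoff_product n \<rho> (br p a) (m + n) q (-1 - m) u
     + (if m = n - 1 then sM (\<kappa> * B (br x q + sG (of_int (- n)) q) a) (\<rho> p (n - 1) u) else 0)
     + (if m = - n then sM (\<kappa> * B (br x p + sG (of_int (- n)) p) a) (\<rho> q (n - 1) u) else 0)"
proof -
  have idx: "-1 - m + n = n - 1 - m" by simp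
  show ?thesis
  proof (cases "m < 0")
    case True
    then show ?thesis
      using action_swap[of q "-1 - m" a n u] action_swap[of p m a n "\<rho> q (-1 - m) u"]
      by (auto simp add: nord_def cutoff_product_def action_distrib idx)
  next
    case False
    then show ?thesis
      using action_swap[of p m a n u] action_swap[of q "-1 - m" a n "\<rho> p m u"]
      by (auto simp add: nord_def cutoff_product_def action_distrib idx)
  qed
qed

text \<open>The two orderings differ exactly for k between 0 and n, by the commutator [p_k, q_{n-1-k}],
  whose central part survives only for n = 1, and then only at k = 0.\<close>

lemma Sum_any_cutoff_change:
  "Sum_any (\<lambda>k. cutoff_product n \<rho> p k q (n - 1 - k) u - nord \<rho> p k q (n - 1 - k) u)
   = sM (of_int n) (\<rho> (br p q) (n - 1) u) + (if n = 1 then sM (\<kappa> * B (br x p) q) u else 0)"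
proof -
  define Z where "Z = \<rho> (br p q) (n - 1) u"
  define C where "C = sM (\<kappa> * B (br x p) q) u"
  define signed where
    "signed k = (if 0 \<le> k \<and> k < n then Z else if n \<le> k \<and> k < 0 then - Z else 0)" for k
  have commutator: "\<rho> p k (\<rho> q (n - 1 - k) u) - \<rho> q (n - 1 - k) (\<rho> p k u)
      = Z + sM (if n = 1 then \<kappa> * B (br x p + sG (of_int k) p) q else 0) u" for k
  proof -
    have "k = - (n - 1 - k) \<longleftrightarrow> n = 1" by auto
    then show ?thesis by (simp add: action_commutator Z_def)
  qed
  have pointwise: "cutoff_product n \<rho> p k q (n - 1 - k) u - nord \<rho> p k q (n - 1 - k) u
      = signed k + (if n = 1 \<and> k = 0 then C else 0)" for k
    using commutator[of k]
    by (cases "0 \<le> k"; cases "k < n")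
       (auto simp: nord_def cutoff_product_def signed_def C_def algebra_simps)
  have "finite {k. signed k \<noteq> 0}"
    by (rule finite_subset[of _ "{min n 0..max n 0}"]) (auto simp: signed_def split: if_splits)
  moreover have "finite {k. (if n = 1 \<and> k = 0 then C else 0) \<noteq> 0}"
    by (rule finite_subset[of _ "{0}"]) auto
  ultimately have "Sum_any (\<lambda>k. signed k + (if n = 1 \<and> k = 0 then C else 0))
      = Sum_any signed + (if n = 1 then C else 0)"
    by (simp add: Sum_any.distrib)
  also have "Sum_any signed = sM (of_int n) Z"
    unfolding signed_def by (rule Sum_any_signed_count[OF M.vector_space_axioms])
  finally show ?thesis by (simp add: pointwise Z_def C_def)
qed

lemma Sum_any_nord_commutator:
  "Sum_any (\<lambda>m. nord \<rho> p m q (-1 - m) (\<rho> a n u)) - \<rho> a n (Sum_any (\<lambda>m. nord \<rho> p m q (-1 - m) u))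
   = Sum_any (\<lambda>m. nord \<rho> p m (br q a) (n - 1 - m) u) + Sum_any (\<lambda>m. nord \<rho> (br p a) m q (n - 1 - m) u)
     + sM (of_int n) (\<rho> (br (br p a) q) (n - 1) u)
     + (if n = 1 then sM (\<kappa> * B (br x (br p a)) q) u else 0)
     + sM (\<kappa> * B (br x q + sG (of_int (- n)) q) a) (\<rho> p (n - 1) u)
     + sM (\<kappa> * B (br x p + sG (of_int (- n)) p) a) (\<rho> q (n - 1) u)"
  (is "?lhs = Sum_any ?N + Sum_any ?G + ?Z + ?C + ?K1 + ?K2")
proof -
  define shifted where "shifted m = cutoff_product n \<rho> (br p a) (m + n) q (-1 - m) u" for m
  define cutoff where "cutoff k = cutoff_product n \<rho> (br p a) k q (n - 1 - k) u" for k
  have shifted_cutoff: "shifted m = cutoff (m + n)" for m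
    by (simp add: shifted_def cutoff_def)
  have fin_shifted: "finite {m. shifted m \<noteq> 0}"
    unfolding shifted_def using finite_support_cutoff_product[where c = "-1"] by simp
  have fin_cutoff: "finite {k. cutoff k \<noteq> 0}"
    unfolding cutoff_def using finite_support_cutoff_product[where s = 0] by simp
  have fin_delta: "finite {m. (if m = k then y else 0) \<noteq> 0}" for k :: int and y :: 'm
    by (rule finite_subset[of _ "{k}"]) auto
  have fin_outer: "finite {m. \<rho> a n (nord \<rho> p m q (-1 - m) u) \<noteq> 0}"
    by (rule finite_subset[OF _ finite_support_nord[where a = p and b = q and c = "-1" and u = u]])
       (auto simp: module_hom.zero[OF action_hom(1)])
  have additive: "additive (\<rho> a n)"
    by (simp add: additive_def action_distrib)
  have "?lhs = Sum_any (\<lambda>m. nord \<rho> p m q (-1 - m) (\<rho> a n u) - \<rho> a n (nord \<rho> p m q (-1 - m) u))"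
    using finite_support_nord[where c = "-1"] fin_outer
    by (simp add: Sum_any_additive[OF _ additive] Sum_any_diff)
  also have "\<dots> = Sum_any (\<lambda>m. ?N m + shifted m
      + (if m = n - 1 then ?K1 else 0) + (if m = - n then ?K2 else 0))"
    by (simp only: nord_commutator shifted_def)
  also have "\<dots> = Sum_any ?N + Sum_any shifted + ?K1 + ?K2"
    by (simp only: Sum_any.distrib finite_support_add finite_support_nord fin_shifted fin_delta
        Sum_any.delta)
  also have "Sum_any shifted = Sum_any ?G + (Sum_any cutoff - Sum_any ?G)"
    by (simp add: shifted_cutoff Sum_any_shift)
  also have "Sum_any cutoff - Sum_any ?G = ?Z + ?C"
    unfolding cutoff_def
    by (simp flip: Sum_any_diff
        add: Sum_any_cutoff_change finite_support_nord fin_cutoff[unfolded cutoff_def])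
  finally show ?thesis by (simp add: algebra_simps)
qed

lemma nord_linear:
  "Vector_Spaces.linear sG sM (\<lambda>a. nord \<rho> a m b k u)"
  "Vector_Spaces.linear sG sM (\<lambda>b. nord \<rho> a m b k u)"
proof -
  have composite: "Vector_Spaces.linear sG sM (\<lambda>b. \<rho> a m (\<rho> b k u))" for a m k u
    using Vector_Spaces.linear_compose[OF action_linear(2) action_linear(1)] by (simp add: o_def)
  show "Vector_Spaces.linear sG sM (\<lambda>a. nord \<rho> a m b k u)"
    using composite action_linear(2) by (cases "m < 0") (simp_all add: nord_def)
  show "Vector_Spaces.linear sG sM (\<lambda>b. nord \<rho> a m b k u)"
    using composite action_linear(2) by (cases "m < 0") (simp_all add: nord_def)
qed

lemma nord_sums_cancel:
  "(\<Sum>i<d. Sum_any (\<lambda>m. nord \<rho> (v i) m (br (w i) a) (c - m) u))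
   + (\<Sum>i<d. Sum_any (\<lambda>m. nord \<rho> (br (v i) a) m (w i) (c - m) u)) = 0"
proof -
  have "(\<Sum>i<d. nord \<rho> (v i) m (br (w i) a) (c - m) u)
      + (\<Sum>i<d. nord \<rho> (br (v i) a) m (w i) (c - m) u) = 0" for m
    by (rule bilinear_dual_bases_invariance[OF nord_linear])
  then have "Sum_any (\<lambda>m. (\<Sum>i<d. nord \<rho> (v i) m (br (w i) a) (c - m) u)
      + (\<Sum>i<d. nord \<rho> (br (v i) a) m (w i) (c - m) u)) = 0"
    by simp
  moreover have "finite {m. (\<Sum>i<d. nord \<rho> (p i) m (q i) (c - m) u) \<noteq> 0}" for p q
    by (rule finite_subset[of _ "\<Union>i<d. {m. nord \<rho> (p i) m (q i) (c - m) u \<noteq> 0}"])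
       (auto elim: sum.not_neutral_contains_not_neutral simp: finite_support_nord)
  ultimately show ?thesis
    by (simp add: Sum_any.distrib Sum_any_sum finite_support_nord)
qed

lemma normal_ordered_casimir_commutator:
  "(\<Sum>i<d. Sum_any (\<lambda>m. nord \<rho> (v i) m (w i) (-1 - m) (\<rho> a n u)))
     - \<rho> a n (\<Sum>i<d. Sum_any (\<lambda>m. nord \<rho> (v i) m (w i) (-1 - m) u))
   = sM (- 2 * of_int n * (\<kappa> + hv)) (\<rho> a (n - 1) u) - sM (2 * \<kappa>) (\<rho> (br x a) (n - 1) u)
     + (if n = 1 then sM (- 2 * hv * \<kappa> * B x a) u else 0)"
proof -
  define P where "P = \<rho> a (n - 1) u"
  define Q where "Q = \<rho> (br x a) (n - 1) u"
  have central:
    "(\<Sum>i<d. sM (\<kappa> * B (br x (w i) + sG (of_int (- n)) (w i)) a) (\<rho> (v i) (n - 1) u))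
      = sM \<kappa> (sM (- of_int n) P - Q)"
    "(\<Sum>i<d. sM (\<kappa> * B (br x (v i) + sG (of_int (- n)) (v i)) a) (\<rho> (w i) (n - 1) u))
      = sM \<kappa> (sM (- of_int n) P - Q)"
    by (simp_all only: M.scale_scale[symmetric] M.scale_sum_right[symmetric]
        twisted_dual_basis_expansion[OF action_linear(2)])
       (simp_all add: action_distrib P_def Q_def)
  have "(\<Sum>i<d. Sum_any (\<lambda>m. nord \<rho> (v i) m (w i) (-1 - m) (\<rho> a n u)))
     - \<rho> a n (\<Sum>i<d. Sum_any (\<lambda>m. nord \<rho> (v i) m (w i) (-1 - m) u))
    = (\<Sum>i<d. Sum_any (\<lambda>m. nord \<rho> (v i) m (w i) (-1 - m) (\<rho> a n u))
         - \<rho> a n (Sum_any (\<lambda>m. nord \<rho> (v i) m (w i) (-1 - m) u)))"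
    by (simp add: action_distrib sum_subtractf)
  also have "\<dots> = ((\<Sum>i<d. Sum_any (\<lambda>m. nord \<rho> (v i) m (br (w i) a) (n - 1 - m) u))
        + (\<Sum>i<d. Sum_any (\<lambda>m. nord \<rho> (br (v i) a) m (w i) (n - 1 - m) u)))
      + sM (of_int n) (\<rho> (\<Sum>i<d. br (br (v i) a) (w i)) (n - 1) u)
      + (if n = 1 then sM (\<kappa> * B x (\<Sum>i<d. br (br (v i) a) (w i))) u else 0)
      + (\<Sum>i<d. sM (\<kappa> * B (br x (w i) + sG (of_int (- n)) (w i)) a) (\<rho> (v i) (n - 1) u))
      + (\<Sum>i<d. sM (\<kappa> * B (br x (v i) + sG (of_int (- n)) (v i)) a) (\<rho> (w i) (n - 1) u))"
    by (simp add: Sum_any_nord_commutator sum.distrib action_distrib M.scale_sum_right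
        M.scale_sum_left[symmetric] form_distrib form_invariant sum_distrib_left)
  also have "\<dots> = sM (of_int n * (- 2 * hv)) P + (if n = 1 then sM (- 2 * hv * \<kappa> * B x a) u else 0)
      + sM \<kappa> (sM (- of_int n) P - Q) + sM \<kappa> (sM (- of_int n) P - Q)"
    unfolding nord_sums_cancel central casimir_action'
    by (simp add: action_distrib form_distrib P_def mult_ac)
  also have "\<dots> = sM (of_int n * (- 2 * hv) + \<kappa> * (- of_int n) + \<kappa> * (- of_int n)) P
      - sM (\<kappa> + \<kappa>) Q + (if n = 1 then sM (- 2 * hv * \<kappa> * B x a) u else 0)"
    by (simp only: M.scale_left_distrib M.scale_right_diff_distrib M.scale_scale)
       (simp add: algebra_simps)
  also have "of_int n * (- 2 * hv) + \<kappa> * (- of_int n) + \<kappa> * (- of_int n) = - 2 * of_int n * (\<kappa> + hv)"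
    by (simp add: algebra_simps)
  also have "\<kappa> + \<kappa> = 2 * \<kappa>"
    by simp
  finally show ?thesis by (simp add: P_def Q_def)
qed

lemma twist_term_commutator:
  "(\<Sum>i<d. \<rho> (br (br x (v i)) (w i)) (-1) (\<rho> a n u))
     - \<rho> a n (\<Sum>i<d. \<rho> (br (br x (v i)) (w i)) (-1) u)
   = sM (2 * hv) (\<rho> (br x a) (n - 1) u) + (if n = 1 then sM (- 2 * hv * \<kappa> * B x a) u else 0)"
proof -
  have casimir: "(\<Sum>i<d. \<rho> (br (br x (v i)) (w i)) m u') = sM (2 * hv) (\<rho> x m u')" for m u'
    by (simp flip: module_hom.sum[OF action_hom(2)] add: casimir_action module_hom.scale[OF action_hom(2)])
  have central: "(if -1 = - n then \<kappa> * B (br x x + sG (of_int (-1)) x) a else 0)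
      = (if n = 1 then - \<kappa> * B x a else 0)"
    by (auto simp: bracket_self form_distrib)
  have "(\<Sum>i<d. \<rho> (br (br x (v i)) (w i)) (-1) (\<rho> a n u))
      - \<rho> a n (\<Sum>i<d. \<rho> (br (br x (v i)) (w i)) (-1) u)
    = sM (2 * hv) (\<rho> x (-1) (\<rho> a n u) - \<rho> a n (\<rho> x (-1) u))"
    by (simp add: casimir action_distrib M.scale_right_diff_distrib)
  also have "\<dots> = sM (2 * hv) (\<rho> (br x a) (n - 1) u + sM (if n = 1 then - \<kappa> * B x a else 0) u)"
    by (simp only: action_commutator central) simp
  also have "\<dots> = sM (2 * hv) (\<rho> (br x a) (n - 1) u) + (if n = 1 then sM (- 2 * hv * \<kappa> * B x a) u else 0)"
    by (simp add: M.scale_right_distrib M.scale_scale mult_ac)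
  finally show ?thesis .
qed

lemma sugawara_minus_one_commutator:
  assumes "\<kappa> \<noteq> - hv"
  shows "sugawara br x hv \<kappa> sM \<rho> d v w (-1) (\<rho> a n u) - \<rho> a n (sugawara br x hv \<kappa> sM \<rho> d v w (-1) u)
    = sM (- of_int n) (\<rho> a (n - 1) u) - \<rho> (br x a) (n - 1) u"
proof -
  define S where "S u' = (\<Sum>i<d. Sum_any (\<lambda>m. nord \<rho> (v i) m (w i) (-1 - m) u'))" for u'
  define Y where "Y u' = (\<Sum>i<d. \<rho> (br (br x (v i)) (w i)) (-1) u')" for u'
  define c where "c = 1 / (2 * (\<kappa> + hv))"
  define P where "P = \<rho> a (n - 1) u"
  define Q where "Q = \<rho> (br x a) (n - 1) u"
  \<comment> \<open>the central term that the twist term Y is there to cancel\<close>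
  define R where "R = (if n = 1 then sM (- 2 * hv * \<kappa> * B x a) u else 0)"
  have "\<kappa> + hv \<noteq> 0"
    using assms by (simp add: eq_neg_iff_add_eq_0)
  then have "2 * (\<kappa> + hv) \<noteq> 0"
    by (simp only: mult_eq_0_iff) simp
  then have level: "c * (2 * (\<kappa> + hv)) = 1"
    unfolding c_def times_divide_eq_left mult_1 by (rule divide_self)
  have sugawara: "sugawara br x hv \<kappa> sM \<rho> d v w (-1) u' = sM c (S u' - Y u')" for u'
    by (simp add: sugawara_def S_def Y_def c_def)
  have "sugawara br x hv \<kappa> sM \<rho> d v w (-1) (\<rho> a n u) - \<rho> a n (sugawara br x hv \<kappa> sM \<rho> d v w (-1) u)
      = sM c ((S (\<rho> a n u) - \<rho> a n (S u)) - (Y (\<rho> a n u) - \<rho> a n (Y u)))"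
    unfolding sugawara module_hom.scale[OF action_hom(1)] module_hom.diff[OF action_hom(1)]
      M.scale_right_diff_distrib
    by (simp add: algebra_simps)
  also have "\<dots> = sM c ((sM (- 2 * of_int n * (\<kappa> + hv)) P - sM (2 * \<kappa>) Q + R) - (sM (2 * hv) Q + R))"
    unfolding S_def Y_def normal_ordered_casimir_commutator twist_term_commutator P_def Q_def R_def ..
  also have "(sM (- 2 * of_int n * (\<kappa> + hv)) P - sM (2 * \<kappa>) Q + R) - (sM (2 * hv) Q + R)
      = sM (2 * (\<kappa> + hv)) (sM (- of_int n) P - Q)"
  proof -
    have "sM (2 * (\<kappa> + hv)) Q = sM (2 * \<kappa>) Q + sM (2 * hv) Q"
      by (simp flip: M.scale_left_distrib add: distrib_left)
    moreover have "sM (2 * (\<kappa> + hv)) (sM (- of_int n) P) = sM (- 2 * of_int n * (\<kappa> + hv)) P"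
      by (simp add: M.scale_scale mult_ac)
    ultimately show ?thesis
      by (simp add: M.scale_right_diff_distrib algebra_simps)
  qed
  also have "sM c (sM (2 * (\<kappa> + hv)) (sM (- of_int n) P - Q)) = sM (- of_int n) P - Q"
    by (simp only: M.scale_scale level M.scale_one)
  finally show ?thesis
    by (simp only: P_def Q_def)
qed

end

theorem mainTheorem2:
  fixes sG :: "complex \<Rightarrow> 'g::ab_group_add \<Rightarrow> 'g"
    and br :: "'g \<Rightarrow> 'g \<Rightarrow> 'g"
    and B :: "'g \<Rightarrow> 'g \<Rightarrow> complex"
    and hv :: complex
    and d :: nat and v w :: "nat \<Rightarrow> 'g"
    and x :: 'g and \<kappa> :: complex
    and sM :: "complex \<Rightarrow> 'm::ab_group_add \<Rightarrow> 'm"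
    and \<rho> :: "'g \<Rightarrow> int \<Rightarrow> 'm \<Rightarrow> 'm"
  assumes "simple_lie_algebra sG br"
    and "invariant_form sG br B"
    and "\<forall>a b. killing_form sG br a b = 2 * hv * B a b"
    and "dual_bases sG B d v w"
    and "ad_nilpotent br x"
    and "\<kappa> \<noteq> - hv"
    and "twisted_mode_module sG br B x \<kappa> sM \<rho>"
  shows "\<forall>a n u.
     sugawara br x hv \<kappa> sM \<rho> d v w (-1) (\<rho> a n u) - \<rho> a n (sugawara br x hv \<kappa> sM \<rho> d v w (-1) u)
     = sM (- of_int n) (\<rho> a (n - 1) u) - \<rho> (br x a) (n - 1) u"
proof -
  interpret twisted_sugawara sG br B d v w hv x \<kappa> sM \<rho>
    using assms by unfold_locales (simp_all add: simple_lie_algebra_def)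
  show ?thesis
    using sugawara_minus_one_commutator[OF assms(6)] by blast
qed

end
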